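(* Let $n,m\ge 2$ be integers and $P_n,P_m$ paths on $n$ and $m$ vertices. Then $AT(P_n+_R P_m)=3$.
   Context: For an orientation $D$, a subdigraph is Eulerian if every vertex has equal in- and outdegree in it; $D$ is an AT-orientation if the numbers of Eulerian subgraphs with an even and with an odd number of arcs differ; $AT(G)$ is the smallest $k$ such that $G$ has an AT-orientation of maximum outdegree at most $k-1$. $R(G)$ has vertex set $V(G)\cup E(G)$ and consists of $G$ together with, for each edge $e=xy$, a new vertex $e$ adjacent to $x$ and $y$. $G+_R H$ has vertex set $(V(G)\cup E(G))\times V(H)$, with $(u_1,u_2)\sim(v_1,v_2)$ iff [$u_1=v_1\in V(G)$ and $u_2v_2\in E(H)$] or [$u_2=v_2$ and $u_1v_1\in E(R(G))$]. *)

theory Defs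
  imports Main
begin

definition is_graph :: "'v set \<Rightarrow> 'v set set \<Rightarrow> bool" where
  "is_graph V E \<longleftrightarrow> finite V \<and> (\<forall>e\<in>E. \<exists>x y. x \<in> V \<and> y \<in> V \<and> x \<noteq> y \<and> e = {x, y})"

definition is_orientation :: "'v set \<Rightarrow> 'v set set \<Rightarrow> ('v \<times> 'v) set \<Rightarrow> bool" where
  "is_orientation V E A \<longleftrightarrow>
     (\<forall>(x, y)\<in>A. x \<noteq> y \<and> {x, y} \<in> E) \<and>
     (\<forall>e\<in>E. \<exists>!a. a \<in> A \<and> {fst a, snd a} = e)"

definition outdeg :: "('v \<times> 'v) set \<Rightarrow> 'v \<Rightarrow> nat" where
  "outdeg A v = card {w. (v, w) \<in> A}"

definition indeg :: "('v \<times> 'v) set \<Rightarrow> 'v \<Rightarrow> nat" where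
  "indeg A v = card {w. (w, v) \<in> A}"

definition eulerian :: "('v \<times> 'v) set \<Rightarrow> bool" where
  "eulerian S \<longleftrightarrow> (\<forall>v. indeg S v = outdeg S v)"

definition AT_orientation :: "('v \<times> 'v) set \<Rightarrow> bool" where
  "AT_orientation A \<longleftrightarrow>
     card {S. S \<subseteq> A \<and> eulerian S \<and> even (card S)}
       \<noteq> card {S. S \<subseteq> A \<and> eulerian S \<and> odd (card S)}"

definition AT :: "'v set \<Rightarrow> 'v set set \<Rightarrow> nat" where
  "AT V E = (LEAST k. \<exists>A. is_orientation V E A \<and> AT_orientation A \<and>
                         (\<forall>v\<in>V. outdeg A v + 1 \<le> k))"

text \<open>R(G): vertex set V(G) \<union> E(G) (as a disjoint sum), G plus, for each edge
e = xy, a new vertex e adjacent to x and y.\<close>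

definition R_verts :: "'v set \<Rightarrow> 'v set set \<Rightarrow> ('v + 'v set) set" where
  "R_verts V E = Inl ` V \<union> Inr ` E"

definition R_edges :: "'v set \<Rightarrow> 'v set set \<Rightarrow> ('v + 'v set) set set" where
  "R_edges V E = {{Inl x, Inl y} | x y. {x, y} \<in> E}
                 \<union> {{Inl x, Inr e} | x e. e \<in> E \<and> x \<in> e}"

definition RP_verts :: "'v set \<Rightarrow> 'v set set \<Rightarrow> 'w set \<Rightarrow> (('v + 'v set) \<times> 'w) set" where
  "RP_verts VG EG VH = R_verts VG EG \<times> VH"

definition RP_edges :: "'v set \<Rightarrow> 'v set set \<Rightarrow> 'w set \<Rightarrow> 'w set set
                        \<Rightarrow> (('v + 'v set) \<times> 'w) set set" where
  "RP_edges VG EG VH EH =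
     {{(Inl u, a), (Inl u, b)} | u a b. u \<in> VG \<and> {a, b} \<in> EH}
     \<union> {{(p, c), (q, c)} | p q c. c \<in> VH \<and> {p, q} \<in> R_edges VG EG}"

definition path_verts :: "nat \<Rightarrow> nat set" where
  "path_verts n = {0..<n}"

definition path_edges :: "nat \<Rightarrow> nat set set" where
  "path_edges n = {{i, Suc i} | i. Suc i < n}"

end

theory Submission
  imports Defs
begin

text \<open>Rank the vertex (Inl i, c) of P_n +_R P_m by i + c and put each edge vertex (Inr e, c)
just above its higher endpoint. Orienting every edge downwards gives an acyclic orientation;
its only Eulerian subdigraph is the empty one, so it is an AT-orientation, and every vertex has
at most two lower neighbours. Hence AT \<le> 3. Conversely, the triangles over the edge {0, 1}
of P_n in the layers 0 and 1, together with the edge joining their copies of (Inl 0), have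
7 edges on 6 vertices, so every orientation has a vertex of outdegree at least 2.\<close>

lemma is_graph_edgeE:
  assumes "is_graph V E" and "e \<in> E"
  obtains x y where "x \<in> V" "y \<in> V" "x \<noteq> y" "e = {x, y}"
  using assms unfolding is_graph_def by blast

lemma is_graph_edge_subset: "is_graph V E \<Longrightarrow> e \<in> E \<Longrightarrow> e \<subseteq> V"
  by (erule is_graph_edgeE) auto

lemma is_graph_edgeD: "is_graph V E \<Longrightarrow> {x, y} \<in> E \<Longrightarrow> x \<in> V \<and> y \<in> V \<and> x \<noteq> y"
  by (erule is_graph_edgeE) (auto simp: doubleton_eq_iff)

lemma is_graph_path: "is_graph (path_verts n) (path_edges n)"
  unfolding is_graph_def path_verts_def path_edges_def by (fastforce dest: Suc_lessD)

lemma finite_edges: "is_graph V E \<Longrightarrow> finite E"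
  by (rule finite_subset[of _ "Pow V"]) (auto simp: is_graph_def)

lemma path_edge_iff: "{x, y} \<in> path_edges n \<longleftrightarrow> (y = Suc x \<or> x = Suc y) \<and> x < n \<and> y < n"
  unfolding path_edges_def by (auto simp: doubleton_eq_iff insert_commute)

lemma path_edgeE:
  assumes "e \<in> path_edges n"
  obtains k where "e = {k, Suc k}" "Suc k < n"
  using assms unfolding path_edges_def by blast

lemma R_base_edge: "{x, y} \<in> E \<Longrightarrow> {Inl x, Inl y} \<in> R_edges V E"
  unfolding R_edges_def by blast

lemma R_new_edge: "e \<in> E \<Longrightarrow> x \<in> e \<Longrightarrow> {Inl x, Inr e} \<in> R_edges V E"
  unfolding R_edges_def by blast

lemma RP_fibre_edge: "u \<in> VG \<Longrightarrow> {a, b} \<in> EH \<Longrightarrow> {(Inl u, a), (Inl u, b)} \<in> RP_edges VG EG VH EH"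
  unfolding RP_edges_def by blast

lemma RP_layer_edge: "c \<in> VH \<Longrightarrow> {p, q} \<in> R_edges VG EG \<Longrightarrow> {(p, c), (q, c)} \<in> RP_edges VG EG VH EH"
  unfolding RP_edges_def by blast

lemma R_edgeE:
  assumes "{p, q} \<in> R_edges V E"
  obtains (base) x y where "p = Inl x" "q = Inl y" "{x, y} \<in> E"
    | (new) x e where "p = Inl x" "q = Inr e" "e \<in> E" "x \<in> e"
    | (new') x e where "p = Inr e" "q = Inl x" "e \<in> E" "x \<in> e"
  using assms unfolding R_edges_def by (auto simp: doubleton_eq_iff insert_commute)

lemma RP_edgeE:
  assumes "{v, w} \<in> RP_edges VG EG VH EH"
  obtains (fibre) u a b where "v = (Inl u, a)" "w = (Inl u, b)" "u \<in> VG" "{a, b} \<in> EH"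
    | (layer) p q c where "v = (p, c)" "w = (q, c)" "c \<in> VH" "{p, q} \<in> R_edges VG EG"
  using assms unfolding RP_edges_def by (auto simp: doubleton_eq_iff insert_commute)

lemma is_graph_R:
  assumes G: "is_graph V E" shows "is_graph (R_verts V E) (R_edges V E)"
  unfolding is_graph_def
proof (intro conjI ballI)
  show "finite (R_verts V E)"
    using G finite_edges[OF G] by (simp add: R_verts_def is_graph_def)
  fix f assume "f \<in> R_edges V E"
  then consider (base) x y where "f = {Inl x, Inl y}" "{x, y} \<in> E"
    | (new) x e where "f = {Inl x, Inr e}" "e \<in> E" "x \<in> e"
    unfolding R_edges_def by blast
  then show "\<exists>a b. a \<in> R_verts V E \<and> b \<in> R_verts V E \<and> a \<noteq> b \<and> f = {a, b}"
  proof cases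
    case base
    then show ?thesis using is_graph_edgeD[OF G base(2)] by (auto simp: R_verts_def)
  next
    case new
    then show ?thesis using is_graph_edge_subset[OF G new(2)] by (auto simp: R_verts_def)
  qed
qed

lemma is_graph_RP:
  assumes G: "is_graph VG EG" and H: "is_graph VH EH"
  shows "is_graph (RP_verts VG EG VH) (RP_edges VG EG VH EH)"
  unfolding is_graph_def
proof (intro conjI ballI)
  have RG: "is_graph (R_verts VG EG) (R_edges VG EG)" by (rule is_graph_R[OF G])
  show "finite (RP_verts VG EG VH)"
    using RG H by (simp add: RP_verts_def is_graph_def)
  fix f assume "f \<in> RP_edges VG EG VH EH"
  then consider (fibre) u a b where "f = {(Inl u, a), (Inl u, b)}" "u \<in> VG" "{a, b} \<in> EH"
    | (layer) p q c where "f = {(p, c), (q, c)}" "c \<in> VH" "{p, q} \<in> R_edges VG EG"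
    unfolding RP_edges_def by blast
  then show "\<exists>x y. x \<in> RP_verts VG EG VH \<and> y \<in> RP_verts VG EG VH \<and> x \<noteq> y \<and> f = {x, y}"
  proof cases
    case fibre
    then show ?thesis using is_graph_edgeD[OF H fibre(3)] by (auto simp: RP_verts_def R_verts_def)
  next
    case layer
    then show ?thesis using is_graph_edgeD[OF RG layer(3)] by (auto simp: RP_verts_def)
  qed
qed

lemma is_orientation_arc_edge: "is_orientation V E A \<Longrightarrow> (x, y) \<in> A \<Longrightarrow> {x, y} \<in> E"
  unfolding is_orientation_def by blast

lemma is_orientation_edge_arc:
  assumes "is_orientation V E A" and "e \<in> E"
  obtains x y where "(x, y) \<in> A" "e = {x, y}"
proof -
  have "\<exists>a. a \<in> A \<and> {fst a, snd a} = e"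
    using assms unfolding is_orientation_def by (meson ex1_implies_ex)
  then show ?thesis using that by force
qed

lemma finite_orientation:
  assumes "is_graph V E" and "is_orientation V E A"
  shows "finite A"
proof (rule finite_subset)
  show "A \<subseteq> V \<times> V"
    using is_graph_edge_subset[OF assms(1) is_orientation_arc_edge[OF assms(2)]] by fast
  show "finite (V \<times> V)" using assms(1) by (simp add: is_graph_def)
qed

lemma finite_out_neighbours:
  assumes "is_graph V E" and "is_orientation V E A"
  shows "finite {w. (v, w) \<in> A}"
  by (rule finite_subset[of _ "snd ` A"]) (use finite_orientation[OF assms] in force)+

lemma outdeg_ge_2:
  assumes "finite {w. (v, w) \<in> A}" and "(v, w1) \<in> A" "(v, w2) \<in> A" "w1 \<noteq> w2"
  shows "2 \<le> outdeg A v"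
proof -
  have "card {w1, w2} \<le> outdeg A v"
    unfolding outdeg_def by (rule card_mono) (use assms in auto)
  then show ?thesis using assms(4) by simp
qed

lemma orientation_outdeg_ge_2_if_more_edges_than_vertices:
  assumes G: "is_graph V E" and A: "is_orientation V E A"
    and F: "F \<subseteq> E" "\<Union>F \<subseteq> W" and W: "finite W" "card W < card F"
  shows "\<exists>v\<in>W. 2 \<le> outdeg A v"
proof (rule ccontr)
  assume "\<not> ?thesis"
  then have low: "outdeg A v \<le> 1" if "v \<in> W" for v using that by fastforce
  \<comment> \<open>If all outdegrees on W were at most 1, the tail map would inject the arcs over F into W.\<close>
  define AF where "AF = {(x, y) \<in> A. {x, y} \<in> F}"
  have "finite AF"
    by (rule finite_subset[of _ "W \<times> W"]) (use F W in \<open>auto simp: AF_def\<close>)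
  have "F \<subseteq> (\<lambda>(x, y). {x, y}) ` AF"
  proof
    fix f assume "f \<in> F"
    moreover obtain x y where "(x, y) \<in> A" "f = {x, y}"
      using is_orientation_edge_arc[OF A] \<open>f \<in> F\<close> F(1) by blast
    ultimately show "f \<in> (\<lambda>(x, y). {x, y}) ` AF"
      unfolding AF_def by force
  qed
  then have "card F \<le> card AF"
    using \<open>finite AF\<close> by (rule surj_card_le[rotated])
  also have "card AF \<le> card W"
  proof (rule card_inj_on_le)
    show "inj_on fst AF"
    proof (rule inj_onI)
      fix a b assume "a \<in> AF" "b \<in> AF" "fst a = fst b"
      then obtain v w1 w2 where "a = (v, w1)" "b = (v, w2)" "(v, w1) \<in> A" "(v, w2) \<in> A" "v \<in> W"
        using F by (cases a, cases b) (auto simp: AF_def)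
      then show "a = b"
        using low outdeg_ge_2[OF finite_out_neighbours[OF G A]] by fastforce
    qed
    show "fst ` AF \<subseteq> W" using F by (auto simp: AF_def)
  qed (rule W(1))
  finally show False using W(2) by simp
qed

lemma is_orientation_rank_decreasing:
  fixes r :: "'v \<Rightarrow> 'a::linorder"
  assumes G: "is_graph V E" and r: "\<And>x y. {x, y} \<in> E \<Longrightarrow> r x \<noteq> r y"
  shows "is_orientation V E {(x, y). {x, y} \<in> E \<and> r y < r x}" (is "is_orientation V E ?A")
proof -
  have "\<exists>!a. a \<in> ?A \<and> {fst a, snd a} = e" if eE: "e \<in> E" for e
  proof -
    obtain a b where "e = {a, b}" using is_graph_edgeE[OF G eE] by metis
    moreover have "r a \<noteq> r b" using r eE \<open>e = {a, b}\<close> by blast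
    ultimately obtain x y where e: "e = {x, y}" and "r y < r x"
      by (metis insert_commute linorder_neq_iff)
    show ?thesis
    proof (rule ex1I[of _ "(x, y)"])
      show "(x, y) \<in> ?A \<and> {fst (x, y), snd (x, y)} = e"
        using \<open>e \<in> E\<close> e \<open>r y < r x\<close> by simp
      fix a assume "a \<in> ?A \<and> {fst a, snd a} = e"
      with e \<open>r y < r x\<close> show "a = (x, y)" by (cases a) (auto simp: doubleton_eq_iff)
    qed
  qed
  then show ?thesis unfolding is_orientation_def by auto
qed

lemma eulerian_rank_decreasing_empty:
  fixes r :: "'v \<Rightarrow> 'a::linorder"
  assumes "finite S" and "eulerian S" and dec: "\<And>x y. (x, y) \<in> S \<Longrightarrow> r y < r x"
  shows "S = {}"
proof (rule ccontr)
  assume "S \<noteq> {}"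
  then have "Max (r ` fst ` S) \<in> r ` fst ` S" using \<open>finite S\<close> by (simp add: Max_in)
  then obtain x where x: "x \<in> fst ` S" and x_Max: "r x = Max (r ` fst ` S)" by (metis imageE)
  have x_max: "r z \<le> r x" if "z \<in> fst ` S" for z
    unfolding x_Max using that \<open>finite S\<close> by (simp add: Max_ge)
  have "outdeg S x > 0"
    using x \<open>finite S\<close> unfolding outdeg_def
    by (subst card_gt_0_iff) (force intro: finite_subset[of _ "snd ` S"])
  then have "indeg S x > 0" using \<open>eulerian S\<close> unfolding eulerian_def by simp
  then have "{w. (w, x) \<in> S} \<noteq> {}" unfolding indeg_def by (metis card.empty less_irrefl)
  then obtain w where "(w, x) \<in> S" by blast
  then show False using dec x_max[of w] by force
qed

lemma AT_orientation_rank_decreasing: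
  fixes r :: "'v \<Rightarrow> 'a::linorder"
  assumes "finite A" and "\<And>x y. (x, y) \<in> A \<Longrightarrow> r y < r x"
  shows "AT_orientation A"
proof -
  have empty: "S = {}" if "S \<subseteq> A" "eulerian S" for S
    using eulerian_rank_decreasing_empty[of S r] that assms finite_subset by blast
  have "eulerian {}" by (simp add: eulerian_def indeg_def outdeg_def)
  then have "{S. S \<subseteq> A \<and> eulerian S \<and> even (card S)} = {{}}"
    and "{S. S \<subseteq> A \<and> eulerian S \<and> odd (card S)} = {}" by (auto dest: empty)
  then show ?thesis unfolding AT_orientation_def by (simp only: card.empty is_singleton_altdef) simp
qed

lemma AT_eqI:
  assumes "is_orientation V E A" and "AT_orientation A" and "\<forall>v\<in>V. outdeg A v \<le> d"
    and "\<And>B. is_orientation V E B \<Longrightarrow> \<exists>v\<in>V. d \<le> outdeg B v"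
  shows "AT V E = Suc d"
  unfolding AT_def
proof (rule Least_equality)
  show "\<exists>A. is_orientation V E A \<and> AT_orientation A \<and> (\<forall>v\<in>V. outdeg A v + 1 \<le> Suc d)"
    using assms(1-3) by auto
  fix k assume "\<exists>B. is_orientation V E B \<and> AT_orientation B \<and> (\<forall>v\<in>V. outdeg B v + 1 \<le> k)"
  then show "Suc d \<le> k" using assms(4) by fastforce
qed

abbreviation RP_path_verts :: "nat \<Rightarrow> nat \<Rightarrow> ((nat + nat set) \<times> nat) set" where
  "RP_path_verts n m \<equiv> RP_verts (path_verts n) (path_edges n) (path_verts m)"

abbreviation RP_path_edges :: "nat \<Rightarrow> nat \<Rightarrow> ((nat + nat set) \<times> nat) set set" where
  "RP_path_edges n m \<equiv> RP_edges (path_verts n) (path_edges n) (path_verts m) (path_edges m)"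

definition RP_path_rank :: "(nat + nat set) \<times> nat \<Rightarrow> nat" where
  "RP_path_rank v = (case v of (Inl i, c) \<Rightarrow> i + c | (Inr e, c) \<Rightarrow> Suc (Max e + c))"

lemma RP_path_rank_neq:
  assumes "{v, w} \<in> RP_path_edges n m"
  shows "RP_path_rank v \<noteq> RP_path_rank w"
  using assms
proof (cases rule: RP_edgeE)
  case (fibre u a b)
  then show ?thesis by (auto simp: RP_path_rank_def path_edge_iff)
next
  case (layer p q c)
  from layer(4) show ?thesis
  proof (cases rule: R_edgeE)
    case (base x y)
    then show ?thesis using layer by (auto simp: RP_path_rank_def path_edge_iff)
  next
    case (new x e)
    then show ?thesis using layer by (auto simp: RP_path_rank_def elim!: path_edgeE)
  next
    case (new' x e)
    then show ?thesis using layer by (auto simp: RP_path_rank_def elim!: path_edgeE)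
  qed
qed

lemma RP_path_lower_neighbours:
  "card {w. {v, w} \<in> RP_path_edges n m \<and> RP_path_rank w < RP_path_rank v} \<le> 2"
proof -
  obtain p c where v: "v = (p, c)" by fastforce
  define lower :: "((nat + nat set) \<times> nat) set" where
    "lower = (case p of Inl i \<Rightarrow> {(Inl i, c - 1), (Inl (i - 1), c)}
                      | Inr e \<Rightarrow> {(Inl (Min e), c), (Inl (Max e), c)})"
  have "{w. {v, w} \<in> RP_path_edges n m \<and> RP_path_rank w < RP_path_rank v} \<subseteq> lower"
  proof (intro subsetI, elim CollectE conjE)
    fix w assume "{v, w} \<in> RP_path_edges n m" and lt: "RP_path_rank w < RP_path_rank v"
    from this(1) show "w \<in> lower"
    proof (cases rule: RP_edgeE)
      case (fibre u a b)
      then show ?thesis using v lt by (auto simp: lower_def RP_path_rank_def path_edge_iff)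
    next
      case (layer p' q c')
      from layer(4) show ?thesis
      proof (cases rule: R_edgeE)
        case (base x y)
        then show ?thesis
          using layer v lt by (auto simp: lower_def RP_path_rank_def path_edge_iff)
      next
        case (new x e)
        then show ?thesis
          using layer v lt by (auto simp: lower_def RP_path_rank_def elim!: path_edgeE)
      next
        case (new' x e)
        then show ?thesis
          using layer v lt by (auto simp: lower_def RP_path_rank_def elim!: path_edgeE)
      qed
    qed
  qed
  moreover have "finite lower" "card lower \<le> 2" by (cases p; simp add: lower_def card_insert_if)+
  ultimately show ?thesis by (meson card_mono le_trans)
qed

lemma RP_path_outdeg_ge_2:
  assumes "2 \<le> n" "2 \<le> m" and A: "is_orientation (RP_path_verts n m) (RP_path_edges n m) A"
  shows "\<exists>v\<in>RP_path_verts n m. 2 \<le> outdeg A v"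
proof -
  define e :: "nat set" where "e = {0, 1}"
  define W :: "((nat + nat set) \<times> nat) list" where
    "W = [(Inl 0, 0), (Inl 1, 0), (Inr e, 0), (Inl 0, 1), (Inl 1, 1), (Inr e, 1)]"
  define F :: "((nat + nat set) \<times> nat) set list" where
    "F = [{(Inl 0, 0), (Inl 1, 0)}, {(Inl 0, 0), (Inr e, 0)}, {(Inl 1, 0), (Inr e, 0)},
          {(Inl 0, 1), (Inl 1, 1)}, {(Inl 0, 1), (Inr e, 1)}, {(Inl 1, 1), (Inr e, 1)},
          {(Inl 0, 0), (Inl 0, 1)}]"
  have "set F \<subseteq> RP_path_edges n m"
    using assms(1,2) unfolding F_def e_def
    by (auto intro!: RP_fibre_edge RP_layer_edge R_base_edge R_new_edge
        simp: path_verts_def path_edge_iff)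
  moreover have "\<Union>(set F) \<subseteq> set W" by (auto simp: F_def W_def)
  moreover have "card (set W) < card (set F)"
  proof -
    have "distinct F" by (simp add: F_def e_def doubleton_eq_iff)
    then show ?thesis using card_length[of W] by (simp add: distinct_card W_def F_def)
  qed
  moreover have "is_graph (RP_path_verts n m) (RP_path_edges n m)"
    by (intro is_graph_RP is_graph_path)
  ultimately obtain v where "v \<in> set W" "2 \<le> outdeg A v"
    using orientation_outdeg_ge_2_if_more_edges_than_vertices[OF _ A] by blast
  moreover have "set W \<subseteq> RP_path_verts n m"
    using assms(1,2) by (auto simp: W_def e_def RP_verts_def R_verts_def path_verts_def path_edge_iff)
  ultimately show ?thesis by blast
qed

theorem corollary3p7:
  fixes n m :: nat
  assumes "n \<ge> 2" and "m \<ge> 2"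
  shows "AT (RP_verts (path_verts n) (path_edges n) (path_verts m))
            (RP_edges (path_verts n) (path_edges n) (path_verts m) (path_edges m)) = 3"
proof -
  have G: "is_graph (RP_path_verts n m) (RP_path_edges n m)"
    by (intro is_graph_RP is_graph_path)
  define A where "A = {(x, y). {x, y} \<in> RP_path_edges n m \<and> RP_path_rank y < RP_path_rank x}"
  have "is_orientation (RP_path_verts n m) (RP_path_edges n m) A"
    unfolding A_def using G RP_path_rank_neq by (rule is_orientation_rank_decreasing)
  moreover from this have "AT_orientation A"
    by (rule AT_orientation_rank_decreasing[OF finite_orientation[OF G], where r = RP_path_rank])
      (simp add: A_def)
  moreover have "\<forall>v\<in>RP_path_verts n m. outdeg A v \<le> 2"
    using RP_path_lower_neighbours by (simp add: outdeg_def A_def)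
  ultimately have "AT (RP_path_verts n m) (RP_path_edges n m) = Suc 2"
    using AT_eqI RP_path_outdeg_ge_2[OF assms] by blast
  then show ?thesis by simp
qed

end
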